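(* Let $w(x)=\sup_{\tau}\limsup_{T\to\infty}\mathbb E^x\{\int_0^{\tau\wedge T}f(X_s)\,ds+g(X_{\tau\wedge T})\}$. Assume (B1): for every $x\in E$ there is $d(x)<0$ such that $\gamma(x)=\sup_\tau\limsup_{T\to\infty}\mathbb E^x\{\int_0^{\tau\wedge T}(f(X_s)-d(x))ds\}<\infty$. Then for every $x\in E$, $\varepsilon>0$ and every $\varepsilon$-optimal stopping time $\sigma$ for $w(x)$ with $\mathbb E^x\sigma<\infty$, $$\mathbb E^x\{\sigma\}\le\frac{\gamma(x)+2\|g\|+\varepsilon}{-d(x)}.$$
   Context: $E$ is a locally compact separable metric space in which every closed ball is compact. $(X_t)$ is a right-continuous time-homogeneous (standard) Markov process on $E$ with laws $\mathbb P^x$, expectations $\mathbb E^x$, satisfying the weak Feller property $P_t\mathcal C_0\subseteq\mathcal C_0$ ($P_t\phi(x)=\mathbb E^x\phi(X_t)$, $\mathcal C_0$ continuous bounded functions vanishing at infinity) and ergodicity (a unique probability measure $\mu$ with $\|P_t(x,\cdot)-\mu\|_{TV}\to0$ for all $x$). $f,g$ are continuous and bounded; $\|\cdot\|$ is the sup norm. A stopping time $\sigma$ is $\varepsilon$-optimal for $w(x)$ if the expression inside the supremum is $\ge w(x)-\varepsilon$. *)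

theory Defs
  imports "HOL-Probability.Probability"
begin

text \<open>State space E: a locally compact separable metric space in which every closed ball
  is compact.  E is modelled as a type of class metric_space (so E = UNIV).\<close>
definition state_space_ok :: "'a::metric_space itself \<Rightarrow> bool" where
  "state_space_ok _ \<longleftrightarrow>
     locally compact (UNIV :: 'a set) \<and>
     (\<exists>D::'a set. countable D \<and> closure D = UNIV) \<and>
     (\<forall>(x::'a) r. compact (cball x r))"

definition C0 :: "('a::metric_space \<Rightarrow> real) set" where
  "C0 = {\<phi>. continuous_on UNIV \<phi> \<and> bounded (range \<phi>) \<and>
            (\<forall>e>0. \<exists>K. compact K \<and> (\<forall>x. x \<notin> K \<longrightarrow> \<bar>\<phi> x\<bar> < e))}"

definition trans_op ::
  "('a \<Rightarrow> 'w measure) \<Rightarrow> (real \<Rightarrow> 'w \<Rightarrow> 'a) \<Rightarrow> real \<Rightarrow> ('a \<Rightarrow> real) \<Rightarrow> 'a \<Rightarrow> real" where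
  "trans_op P X t \<phi> x = (\<integral>\<omega>. \<phi> (X t \<omega>) \<partial>P x)"

definition tv_dist :: "'a measure \<Rightarrow> 'a measure \<Rightarrow> real" where
  "tv_dist \<nu> \<mu> = (SUP A\<in>sets \<mu>. \<bar>measure \<nu> A - measure \<mu> A\<bar>)"

definition markov_ok ::
  "'w measure \<Rightarrow> ('a::metric_space \<Rightarrow> 'w measure) \<Rightarrow> (real \<Rightarrow> 'w measure) \<Rightarrow>
   (real \<Rightarrow> 'w \<Rightarrow> 'a) \<Rightarrow> bool" where
  "markov_ok M P F X \<longleftrightarrow>
     \<comment> \<open>laws\<close>
     (\<forall>x. prob_space (P x) \<and> sets (P x) = sets M) \<and>
     (\<forall>B\<in>sets M. (\<lambda>x. emeasure (P x) B) \<in> borel_measurable borel) \<and>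
     (\<forall>x. AE \<omega> in P x. X 0 \<omega> = x) \<and>
     \<comment> \<open>filtration and adaptedness\<close>
     (\<forall>t. space (F t) = space M \<and> sets (F t) \<subseteq> sets M) \<and>
     (\<forall>s t. 0 \<le> s \<longrightarrow> s \<le> t \<longrightarrow> sets (F s) \<subseteq> sets (F t)) \<and>
     (\<forall>t\<ge>0. X t \<in> F t \<rightarrow>\<^sub>M borel) \<and>
     (\<lambda>(s, \<omega>). X s \<omega>) \<in> (lborel \<Otimes>\<^sub>M M) \<rightarrow>\<^sub>M borel \<and>
     \<comment> \<open>right-continuous paths\<close>
     (\<forall>\<omega>\<in>space M. \<forall>t\<ge>0. continuous (at_right t) (\<lambda>s. X s \<omega>)) \<and>
     \<comment> \<open>time-homogeneous Markov property w.r.t. F\<close>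
     (\<forall>x s t \<phi> A. 0 \<le> s \<longrightarrow> 0 \<le> t \<longrightarrow> \<phi> \<in> borel_measurable borel \<longrightarrow>
        bounded (range \<phi>) \<longrightarrow> A \<in> sets (F t) \<longrightarrow>
        (\<integral>\<omega>. indicator A \<omega> * \<phi> (X (t + s) \<omega>) \<partial>P x) =
        (\<integral>\<omega>. indicator A \<omega> * trans_op P X s \<phi> (X t \<omega>) \<partial>P x)) \<and>
     \<comment> \<open>weak Feller property\<close>
     (\<forall>t\<ge>0. \<forall>\<phi>\<in>C0. trans_op P X t \<phi> \<in> C0) \<and>
     \<comment> \<open>ergodicity\<close>
     (\<exists>!\<mu>. prob_space \<mu> \<and> sets \<mu> = sets (borel :: 'a measure) \<and>
        (\<forall>x. ((\<lambda>t. tv_dist (distr (P x) borel (X t)) \<mu>) \<longlongrightarrow> 0) at_top))"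

definition stopping_times :: "'w measure \<Rightarrow> (real \<Rightarrow> 'w measure) \<Rightarrow> ('w \<Rightarrow> ennreal) set" where
  "stopping_times M F = {\<tau>. \<forall>t\<ge>0. {\<omega>\<in>space M. \<tau> \<omega> \<le> ennreal t} \<in> sets (F t)}"

definition stop_min :: "('w \<Rightarrow> ennreal) \<Rightarrow> real \<Rightarrow> 'w \<Rightarrow> real" where
  "stop_min \<tau> T \<omega> = enn2real (min (\<tau> \<omega>) (ennreal T))"

definition payoff ::
  "('a \<Rightarrow> 'w measure) \<Rightarrow> (real \<Rightarrow> 'w \<Rightarrow> 'a) \<Rightarrow> ('a \<Rightarrow> real) \<Rightarrow> ('a \<Rightarrow> real) \<Rightarrow>
   'a \<Rightarrow> ('w \<Rightarrow> ennreal) \<Rightarrow> real \<Rightarrow> real" where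
  "payoff P X h k x \<tau> T =
     (\<integral>\<omega>. (LINT s:{0..stop_min \<tau> T \<omega>}|lborel. h (X s \<omega>)) + k (X (stop_min \<tau> T \<omega>) \<omega>) \<partial>P x)"

definition value_fn ::
  "'w measure \<Rightarrow> ('a \<Rightarrow> 'w measure) \<Rightarrow> (real \<Rightarrow> 'w measure) \<Rightarrow> (real \<Rightarrow> 'w \<Rightarrow> 'a) \<Rightarrow>
   ('a \<Rightarrow> real) \<Rightarrow> ('a \<Rightarrow> real) \<Rightarrow> 'a \<Rightarrow> ereal" where
  "value_fn M P F X h k x =
     (SUP \<tau>\<in>stopping_times M F. Limsup at_top (\<lambda>T. ereal (payoff P X h k x \<tau> T)))"

definition sup_norm :: "('a \<Rightarrow> real) \<Rightarrow> real" where
  "sup_norm g = (SUP y. \<bar>g y\<bar>)"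

end

theory Submission
  imports Defs
begin

text \<open>Shifting the running reward by the constant \<open>-d(x) > 0\<close> changes the payoff of a stopping
  time \<open>\<sigma>\<close> stopped at \<open>T\<close> by \<open>-d(x) E(\<sigma> \<and> T)\<close> and removes the terminal reward, which is worth at
  most \<open>\<parallel>g\<parallel>\<close>.  Hence the shifted value \<open>\<gamma>(x)\<close> exceeds the payoff of \<open>\<sigma>\<close> by at least
  \<open>-d(x) E(\<sigma> \<and> T) - \<parallel>g\<parallel>\<close>, while \<open>\<epsilon>\<close>-optimality and stopping immediately show that this payoff is at
  least \<open>g(x) - \<epsilon> \<ge> -\<parallel>g\<parallel> - \<epsilon>\<close>.  Thus \<open>-d(x) E(\<sigma> \<and> T) \<le> \<gamma>(x) + 2\<parallel>g\<parallel> + \<epsilon>\<close> for all \<open>T\<close>, and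
  monotone convergence lets \<open>T \<rightarrow> \<infinity>\<close>.\<close>

lemma stopping_times_borel_measurable:
  assumes "\<tau> \<in> stopping_times M F" and "\<And>t. sets (F t) \<subseteq> sets M"
  shows "\<tau> \<in> borel_measurable M"
proof (rule borel_measurableI_le)
  fix y :: ennreal
  show "{\<omega> \<in> space M. \<tau> \<omega> \<le> y} \<in> sets M"
  proof (cases y)
    case (real t)
    then show ?thesis
      using assms unfolding stopping_times_def by auto
  qed simp
qed

lemma zero_in_stopping_times:
  assumes "\<And>t. space (F t) = space M"
  shows "(\<lambda>_. 0) \<in> stopping_times M F"
  using sets.top[of "F _"] assms unfolding stopping_times_def by simp

lemma stop_min_nonneg: "0 \<le> stop_min \<tau> T \<omega>"
  unfolding stop_min_def by simp

lemma stop_min_le: "0 \<le> T \<Longrightarrow> stop_min \<tau> T \<omega> \<le> T"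
  unfolding stop_min_def by (rule enn2real_leI) auto

lemma stop_min_mono: "0 \<le> S \<Longrightarrow> S \<le> T \<Longrightarrow> stop_min \<tau> S \<omega> \<le> stop_min \<tau> T \<omega>"
  unfolding stop_min_def
  by (rule enn2real_mono) (auto simp: min_less_iff_disj min.coboundedI2 intro: min.mono)

lemma ennreal_stop_min: "0 \<le> T \<Longrightarrow> ennreal (stop_min \<tau> T \<omega>) = min (\<tau> \<omega>) (ennreal T)"
  unfolding stop_min_def by (intro ennreal_enn2real) (auto simp: min_less_iff_disj)

lemma borel_measurable_stop_min [measurable]:
  "\<tau> \<in> borel_measurable M \<Longrightarrow> stop_min \<tau> T \<in> borel_measurable M"
  unfolding stop_min_def by measurable

lemma SUP_min_of_nat: "(SUP n. min a (of_nat n)) = (a :: ennreal)"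
  by (simp add: inf_min[symmetric] inf_SUP[symmetric] ennreal_SUP_of_nat_eq_top)

lemma abs_le_sup_norm: "bounded (range g) \<Longrightarrow> \<bar>g y\<bar> \<le> sup_norm g"
  unfolding sup_norm_def bounded_iff
  by (auto intro!: cSUP_upper bdd_aboveI2)

context
  fixes M :: "'w measure" and X :: "real \<Rightarrow> 'w \<Rightarrow> 'a::topological_space"
  assumes jointly_measurable: "(\<lambda>(s, \<omega>). X s \<omega>) \<in> (lborel \<Otimes>\<^sub>M M) \<rightarrow>\<^sub>M borel"
begin

lemma borel_measurable_path:
  assumes "\<omega> \<in> space M" and "h \<in> borel_measurable borel"
  shows "(\<lambda>s. h (X s \<omega>) :: real) \<in> borel_measurable lborel"
proof -
  have "(\<lambda>s. (s, \<omega>)) \<in> lborel \<rightarrow>\<^sub>M (lborel \<Otimes>\<^sub>M M)"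
    using assms(1) by measurable
  from measurable_compose[OF measurable_compose[OF this jointly_measurable] assms(2)]
  show ?thesis by simp
qed

lemma borel_measurable_path_at:
  assumes "c \<in> borel_measurable M" and "h \<in> borel_measurable borel"
  shows "(\<lambda>\<omega>. h (X (c \<omega>) \<omega>) :: real) \<in> borel_measurable M"
proof -
  have "(\<lambda>\<omega>. (c \<omega>, \<omega>)) \<in> M \<rightarrow>\<^sub>M (lborel \<Otimes>\<^sub>M M)"
    using assms(1) by (intro measurable_Pair) (auto simp: measurable_lborel2)
  from measurable_compose[OF measurable_compose[OF this jointly_measurable] assms(2)]
  show ?thesis by simp
qed

lemma borel_measurable_path_integral:
  assumes c: "c \<in> borel_measurable M" and h: "h \<in> borel_measurable borel"
  shows "(\<lambda>\<omega>. LINT s:{0..c \<omega>}|lborel. h (X s \<omega>) :: real) \<in> borel_measurable M"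
proof -
  have [measurable]: "(\<lambda>p. X (snd p) (fst p)) \<in> (M \<Otimes>\<^sub>M lborel) \<rightarrow>\<^sub>M borel"
    using measurable_compose[OF measurable_pair_swap' jointly_measurable]
    by (simp add: case_prod_beta)
  have [measurable]: "Measurable.pred (M \<Otimes>\<^sub>M lborel) (\<lambda>p. snd p \<in> {0..c (fst p)})"
    unfolding atLeastAtMost_iff using c by measurable
  have "(\<lambda>(\<omega>, s). indicator {0..c \<omega>} s *\<^sub>R h (X s \<omega>)) \<in> borel_measurable (M \<Otimes>\<^sub>M lborel)"
    using h by measurable
  from lborel.borel_measurable_lebesgue_integral[OF this]
  show ?thesis unfolding set_lebesgue_integral_def .
qed


lemma set_integrable_path:
  assumes "\<omega> \<in> space M" and "h \<in> borel_measurable borel" and "\<And>y. \<bar>h y\<bar> \<le> B"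
  shows "set_integrable lborel {0..c} (\<lambda>s. h (X s \<omega>) :: real)"
  unfolding set_integrable_def
  using borel_measurable_path[OF assms(1,2)] assms(3)
  by (intro integrableI_bounded_set_indicator[where B=B]) (auto simp: emeasure_lborel_Icc_eq)

lemma abs_path_integral_le:
  assumes "\<omega> \<in> space M" and "h \<in> borel_measurable borel" and B: "\<And>y. \<bar>h y\<bar> \<le> B"
    and "0 \<le> c"
  shows "\<bar>LINT s:{0..c}|lborel. h (X s \<omega>) :: real\<bar> \<le> B * c"
proof -
  have "\<bar>LINT s:{0..c}|lborel. h (X s \<omega>)\<bar> \<le> (LINT s:{0..c}|lborel. \<bar>h (X s \<omega>)\<bar>)"
    using integral_norm_bound[of lborel "\<lambda>s. indicator {0..c} s *\<^sub>R h (X s \<omega>)"]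
    by (simp add: set_lebesgue_integral_def abs_mult)
  also have "\<dots> \<le> (LINT s:{0..c}|lborel. B)"
    using set_integrable_path[OF assms(1-3)] B \<open>0 \<le> c\<close>
    by (intro set_integral_mono set_integrable_abs) (auto simp: set_integrable_def
        intro!: integrableI_bounded_set_indicator[where B="\<bar>B\<bar>"])
  also have "\<dots> = B * c"
    using \<open>0 \<le> c\<close> by (simp add: set_integral_const mult.commute)
  finally show ?thesis .
qed

lemma path_integral_diff_const:
  assumes "\<omega> \<in> space M" and "h \<in> borel_measurable borel" and "\<And>y. \<bar>h y\<bar> \<le> B"
    and "0 \<le> c"
  shows "(LINT s:{0..c}|lborel. h (X s \<omega>) - k :: real) = (LINT s:{0..c}|lborel. h (X s \<omega>)) - k * c"
proof -
  have "set_integrable lborel {0..c} (\<lambda>_. k)"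
    unfolding set_integrable_def using \<open>0 \<le> c\<close>
    by (intro integrableI_bounded_set_indicator[where B="\<bar>k\<bar>"]) auto
  with set_integrable_path[OF assms(1-3)] \<open>0 \<le> c\<close> show ?thesis
    by (simp add: set_integral_const mult.commute)
qed

end

lemma (in prob_space) integrable_stop_min:
  assumes "\<tau> \<in> borel_measurable M" and "0 \<le> T"
  shows "integrable M (stop_min \<tau> T)"
  using assms by (intro integrable_const_bound[where B=T]) (auto simp: stop_min_nonneg stop_min_le)

lemma (in prob_space) integral_stop_min_mono:
  assumes "\<tau> \<in> borel_measurable M" and "0 \<le> S" and "S \<le> T"
  shows "(\<integral>\<omega>. stop_min \<tau> S \<omega> \<partial>M) \<le> (\<integral>\<omega>. stop_min \<tau> T \<omega> \<partial>M)"
  using assms by (intro integral_mono integrable_stop_min stop_min_mono) auto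

lemma (in prob_space) nn_integral_eq_SUP_integral_stop_min:
  assumes "\<tau> \<in> borel_measurable M"
  shows "(\<integral>\<^sup>+ \<omega>. \<tau> \<omega> \<partial>M) = (SUP n. ennreal (\<integral>\<omega>. stop_min \<tau> (real n) \<omega> \<partial>M))"
proof -
  have "(\<integral>\<^sup>+ \<omega>. \<tau> \<omega> \<partial>M) = (\<integral>\<^sup>+ \<omega>. (SUP n. min (\<tau> \<omega>) (of_nat n)) \<partial>M)"
    by (simp add: SUP_min_of_nat)
  also have "\<dots> = (SUP n. \<integral>\<^sup>+ \<omega>. min (\<tau> \<omega>) (of_nat n) \<partial>M)"
    using assms
    by (intro nn_integral_monotone_convergence_SUP)
       (auto simp: incseq_def le_fun_def intro: min.coboundedI2 order.trans[OF _ of_nat_mono])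
  also have "\<dots> = (SUP n. \<integral>\<^sup>+ \<omega>. ennreal (stop_min \<tau> (real n) \<omega>) \<partial>M)"
    by (simp add: ennreal_stop_min ennreal_of_nat_eq_real_of_nat)
  also have "\<dots> = (SUP n. ennreal (\<integral>\<omega>. stop_min \<tau> (real n) \<omega> \<partial>M))"
    using assms by (simp add: nn_integral_eq_integral integrable_stop_min stop_min_nonneg)
  finally show ?thesis .
qed

lemma payoff_le_shifted_payoff:
  fixes X :: "real \<Rightarrow> 'w \<Rightarrow> 'a::topological_space"
  assumes J: "(\<lambda>(s, \<omega>). X s \<omega>) \<in> (lborel \<Otimes>\<^sub>M M) \<rightarrow>\<^sub>M borel"
    and prob: "prob_space (P x)" and sets: "sets (P x) = sets M"
    and \<tau>: "\<tau> \<in> borel_measurable M"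
    and f: "f \<in> borel_measurable borel" "bounded (range f)"
    and g: "g \<in> borel_measurable borel" "bounded (range g)"
    and T: "0 \<le> T"
  shows "payoff P X f g x \<tau> T
    \<le> payoff P X (\<lambda>z. f z - c) (\<lambda>_. 0) x \<tau> T + c * (\<integral>\<omega>. stop_min \<tau> T \<omega> \<partial>P x) + sup_norm g"
proof -
  interpret prob_space "P x" by (rule prob)
  have measurable_P: "measurable (P x) N = measurable M N" for N :: "real measure"
    by (rule measurable_cong_sets[OF sets refl])
  have space_P: "space (P x) = space M"
    by (rule sets_eq_imp_space_eq[OF sets])
  obtain B where B: "\<And>y. \<bar>f y\<bar> \<le> B"
    using f(2) unfolding bounded_iff by auto
  define A where "A \<omega> = (LINT s:{0..stop_min \<tau> T \<omega>}|lborel. f (X s \<omega>))" for \<omega>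
  define G where "G \<omega> = g (X (stop_min \<tau> T \<omega>) \<omega>)" for \<omega>
  have A_integrable: "integrable (P x) A"
  proof (rule integrable_const_bound[where B="B * T"])
    show "A \<in> borel_measurable (P x)"
      unfolding measurable_P A_def using \<tau> by (intro borel_measurable_path_integral[OF J _ f(1)]) simp
    show "AE \<omega> in P x. norm (A \<omega>) \<le> B * T"
    proof (rule AE_I2)
      fix \<omega> assume "\<omega> \<in> space (P x)"
      then have "\<bar>A \<omega>\<bar> \<le> B * stop_min \<tau> T \<omega>"
        unfolding A_def space_P by (intro abs_path_integral_le[OF J _ f(1) B] stop_min_nonneg)
      also have "\<dots> \<le> B * T"
        using B[of undefined] by (intro mult_left_mono stop_min_le T) auto
      finally show "norm (A \<omega>) \<le> B * T" by simp
    qed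
  qed
  have G_integrable: "integrable (P x) G"
  proof (rule integrable_const_bound[where B="sup_norm g"])
    show "G \<in> borel_measurable (P x)"
      unfolding measurable_P G_def using \<tau> by (intro borel_measurable_path_at[OF J _ g(1)]) simp
  qed (simp add: G_def abs_le_sup_norm g(2))
  have "payoff P X f g x \<tau> T = integral\<^sup>L (P x) A + integral\<^sup>L (P x) G"
    unfolding payoff_def A_def[symmetric] G_def[symmetric]
    using A_integrable G_integrable by (rule Bochner_Integration.integral_add)
  also have "integral\<^sup>L (P x) G \<le> sup_norm g"
    using integral_mono[OF G_integrable integrable_const[of "sup_norm g"]] g(2)
    by (simp add: G_def abs_le_D1[OF abs_le_sup_norm] prob_space)
  also have "integral\<^sup>L (P x) A = (\<integral>\<omega>. A \<omega> - c * stop_min \<tau> T \<omega> \<partial>P x) + c * (\<integral>\<omega>. stop_min \<tau> T \<omega> \<partial>P x)"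
  proof -
    have "integrable (P x) (stop_min \<tau> T)"
      using \<tau> T measurable_cong_sets[OF sets refl] by (intro integrable_stop_min) auto
    with A_integrable show ?thesis by simp
  qed
  also have "(\<integral>\<omega>. A \<omega> - c * stop_min \<tau> T \<omega> \<partial>P x) = payoff P X (\<lambda>z. f z - c) (\<lambda>_. 0) x \<tau> T"
    unfolding payoff_def A_def
    by (intro Bochner_Integration.integral_cong refl)
       (simp add: space_P path_integral_diff_const[OF J _ f(1) B stop_min_nonneg])
  finally show ?thesis by simp
qed

lemma (in prob_space) enn2real_nn_integral_le_if_stop_min_le:
  assumes "\<tau> \<in> borel_measurable M" and bound: "\<And>n. (\<integral>\<omega>. stop_min \<tau> (real n) \<omega> \<partial>M) \<le> K"
  shows "enn2real (\<integral>\<^sup>+ \<omega>. \<tau> \<omega> \<partial>M) \<le> K"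
proof (rule enn2real_leI)
  show "0 \<le> K"
    using Bochner_Integration.integral_nonneg[OF stop_min_nonneg] bound[of 0] by (rule order.trans)
  then show "(\<integral>\<^sup>+ \<omega>. \<tau> \<omega> \<partial>M) \<le> ennreal K"
    using assms by (simp add: nn_integral_eq_SUP_integral_stop_min SUP_le_iff ennreal_leI)
qed

lemma Limsup_payoff_le_shifted:
  fixes X :: "real \<Rightarrow> 'w \<Rightarrow> 'a::topological_space"
  assumes J: "(\<lambda>(s, \<omega>). X s \<omega>) \<in> (lborel \<Otimes>\<^sub>M M) \<rightarrow>\<^sub>M borel"
    and prob: "prob_space (P x)" and sets: "sets (P x) = sets M"
    and \<tau>: "\<tau> \<in> borel_measurable M"
    and f: "f \<in> borel_measurable borel" "bounded (range f)"
    and g: "g \<in> borel_measurable borel" "bounded (range g)"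
    and "c \<le> 0" and "0 \<le> T\<^sub>0"
  shows "Limsup at_top (\<lambda>T. ereal (payoff P X f g x \<tau> T))
    \<le> Limsup at_top (\<lambda>T. ereal (payoff P X (\<lambda>z. f z - c) (\<lambda>_. 0) x \<tau> T))
       + ereal (c * (\<integral>\<omega>. stop_min \<tau> T\<^sub>0 \<omega> \<partial>P x) + sup_norm g)"
proof -
  interpret prob_space "P x" by (rule prob)
  have \<tau>_P: "\<tau> \<in> borel_measurable (P x)"
    using \<tau> measurable_cong_sets[OF sets refl] by blast
  have "\<forall>\<^sub>F T in at_top. ereal (payoff P X f g x \<tau> T)
      \<le> ereal (payoff P X (\<lambda>z. f z - c) (\<lambda>_. 0) x \<tau> T)
         + ereal (c * (\<integral>\<omega>. stop_min \<tau> T\<^sub>0 \<omega> \<partial>P x) + sup_norm g)"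
    using eventually_ge_at_top[of T\<^sub>0]
  proof eventually_elim
    case (elim T)
    have "c * (\<integral>\<omega>. stop_min \<tau> T \<omega> \<partial>P x) \<le> c * (\<integral>\<omega>. stop_min \<tau> T\<^sub>0 \<omega> \<partial>P x)"
      using elim \<open>c \<le> 0\<close> \<open>0 \<le> T\<^sub>0\<close>
      by (intro mult_left_mono_neg integral_stop_min_mono[OF \<tau>_P]) auto
    with payoff_le_shifted_payoff[where P=P and x=x, OF J prob sets \<tau> f g, of T c] elim \<open>0 \<le> T\<^sub>0\<close>
    show ?case by simp
  qed
  then have "Limsup at_top (\<lambda>T. ereal (payoff P X f g x \<tau> T))
    \<le> Limsup at_top (\<lambda>T. ereal (payoff P X (\<lambda>z. f z - c) (\<lambda>_. 0) x \<tau> T)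
         + ereal (c * (\<integral>\<omega>. stop_min \<tau> T\<^sub>0 \<omega> \<partial>P x) + sup_norm g))"
    by (rule Limsup_mono)
  then show ?thesis
    by (subst (asm) Limsup_add_ereal_right) auto
qed

lemma terminal_reward_le_value_fn:
  fixes X :: "real \<Rightarrow> 'w \<Rightarrow> 'a::topological_space"
  assumes J: "(\<lambda>(s, \<omega>). X s \<omega>) \<in> (lborel \<Otimes>\<^sub>M M) \<rightarrow>\<^sub>M borel"
    and prob: "prob_space (P x)" and sets: "sets (P x) = sets M"
    and start: "AE \<omega> in P x. X 0 \<omega> = x"
    and filtration: "\<And>t. space (F t) = space M"
    and g: "g \<in> borel_measurable borel"
  shows "ereal (g x) \<le> value_fn M P F X f g x"
proof -
  interpret prob_space "P x" by (rule prob)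
  have "(LINT s:{0}|lborel. f (X s \<omega>)) = 0" for \<omega>
    unfolding set_lebesgue_integral_def
    by (rule integral_eq_zero_AE) (auto intro: eventually_mono[OF AE_lborel_singleton[of 0]])
  then have "payoff P X f g x (\<lambda>_. 0) T = (\<integral>\<omega>. g (X 0 \<omega>) \<partial>P x)" for T
    by (simp add: payoff_def stop_min_def)
  also have "\<dots> = g x"
    using start borel_measurable_path_at[OF J _ g, of "\<lambda>_. 0"] measurable_cong_sets[OF sets refl]
    by (subst integral_cong_AE[where g="\<lambda>_. g x"]) (auto simp: prob_space)
  finally have "Limsup at_top (\<lambda>T. ereal (payoff P X f g x (\<lambda>_. 0) T)) = ereal (g x)"
    by (simp add: Limsup_const)
  moreover have "Limsup at_top (\<lambda>T. ereal (payoff P X f g x (\<lambda>_. 0) T)) \<le> value_fn M P F X f g x"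
    unfolding value_fn_def by (intro SUP_upper zero_in_stopping_times filtration)
  ultimately show ?thesis by simp
qed

lemma eps_optimal_shifted_value_fn_bound:
  fixes X :: "real \<Rightarrow> 'w \<Rightarrow> 'a::topological_space"
  assumes J: "(\<lambda>(s, \<omega>). X s \<omega>) \<in> (lborel \<Otimes>\<^sub>M M) \<rightarrow>\<^sub>M borel"
    and prob: "prob_space (P x)" and sets: "sets (P x) = sets M"
    and start: "AE \<omega> in P x. X 0 \<omega> = x"
    and filtration: "\<And>t. space (F t) = space M" "\<And>t. sets (F t) \<subseteq> sets M"
    and f: "f \<in> borel_measurable borel" "bounded (range f)"
    and g: "g \<in> borel_measurable borel" "bounded (range g)"
    and \<sigma>: "\<sigma> \<in> stopping_times M F"
    and opt: "Limsup at_top (\<lambda>T. ereal (payoff P X f g x \<sigma> T)) \<ge> value_fn M P F X f g x - ereal \<epsilon>"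
    and c: "c \<le> 0" and T\<^sub>0: "0 \<le> T\<^sub>0"
  shows "ereal (- sup_norm g - \<epsilon>)
    \<le> value_fn M P F X (\<lambda>z. f z - c) (\<lambda>_. 0) x
       + ereal (c * (\<integral>\<omega>. stop_min \<sigma> T\<^sub>0 \<omega> \<partial>P x) + sup_norm g)"
proof -
  have "ereal (- sup_norm g - \<epsilon>) \<le> ereal (g x) - ereal \<epsilon>"
    using abs_le_sup_norm[OF g(2), of x] by simp
  also have "\<dots> \<le> value_fn M P F X f g x - ereal \<epsilon>"
    using terminal_reward_le_value_fn[where P=P and x=x, OF J prob sets start filtration(1) g(1)]
    by (rule ereal_minus_mono) simp
  also have "\<dots> \<le> Limsup at_top (\<lambda>T. ereal (payoff P X f g x \<sigma> T))"
    by (rule opt)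
  also have "\<dots> \<le> Limsup at_top (\<lambda>T. ereal (payoff P X (\<lambda>z. f z - c) (\<lambda>_. 0) x \<sigma> T))
      + ereal (c * (\<integral>\<omega>. stop_min \<sigma> T\<^sub>0 \<omega> \<partial>P x) + sup_norm g)"
    using stopping_times_borel_measurable[OF \<sigma> filtration(2)] f g c T\<^sub>0
    by (intro Limsup_payoff_le_shifted[where P=P and x=x, OF J prob sets]) auto
  also have "\<dots> \<le> value_fn M P F X (\<lambda>z. f z - c) (\<lambda>_. 0) x
      + ereal (c * (\<integral>\<omega>. stop_min \<sigma> T\<^sub>0 \<omega> \<partial>P x) + sup_norm g)"
    unfolding value_fn_def by (intro add_right_mono SUP_upper \<sigma>)
  finally show ?thesis .
qed

theorem lemma2p5:
  fixes M :: "'w measure" and P :: "'a::metric_space \<Rightarrow> 'w measure"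
    and F :: "real \<Rightarrow> 'w measure" and X :: "real \<Rightarrow> 'w \<Rightarrow> 'a"
    and f g :: "'a \<Rightarrow> real" and d :: "'a \<Rightarrow> real"
    and x :: 'a and \<epsilon> :: real and \<sigma> :: "'w \<Rightarrow> ennreal"
  assumes E: "state_space_ok TYPE('a)"
    and Mk: "markov_ok M P F X"
    and f: "continuous_on UNIV f" "bounded (range f)"
    and g: "continuous_on UNIV g" "bounded (range g)"
    and B1: "\<forall>y. d y < 0 \<and> value_fn M P F X (\<lambda>z. f z - d y) (\<lambda>_. 0) y < \<infinity>"
    and eps: "\<epsilon> > 0"
    and \<sigma>: "\<sigma> \<in> stopping_times M F"
    and opt: "Limsup at_top (\<lambda>T. ereal (payoff P X f g x \<sigma> T))
                \<ge> value_fn M P F X f g x - ereal \<epsilon>"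
    and fin: "(\<integral>\<^sup>+ \<omega>. \<sigma> \<omega> \<partial>P x) < \<infinity>"
  shows "ereal (enn2real (\<integral>\<^sup>+ \<omega>. \<sigma> \<omega> \<partial>P x))
           \<le> (value_fn M P F X (\<lambda>z. f z - d x) (\<lambda>_. 0) x + ereal (2 * sup_norm g + \<epsilon>))
              / ereal (- d x)"
proof -
  have prob: "prob_space (P x)" and sets: "sets (P x) = sets M"
    and start: "AE \<omega> in P x. X 0 \<omega> = x"
    and filtration: "\<And>t. space (F t) = space M" "\<And>t. sets (F t) \<subseteq> sets M"
    and J: "(\<lambda>(s, \<omega>). X s \<omega>) \<in> (lborel \<Otimes>\<^sub>M M) \<rightarrow>\<^sub>M borel"
    using Mk unfolding markov_ok_def by auto
  have f_borel: "f \<in> borel_measurable borel" and g_borel: "g \<in> borel_measurable borel"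
    using f(1) g(1) by (simp_all add: borel_measurable_continuous_onI)
  define \<gamma> where "\<gamma> = value_fn M P F X (\<lambda>z. f z - d x) (\<lambda>_. 0) x"
  have "d x < 0" and "\<gamma> < \<infinity>"
    using B1 unfolding \<gamma>_def by auto
  have \<gamma>_bound: "ereal (- sup_norm g - \<epsilon>)
      \<le> \<gamma> + ereal (d x * (\<integral>\<omega>. stop_min \<sigma> (real n) \<omega> \<partial>P x) + sup_norm g)" for n :: nat
    unfolding \<gamma>_def using \<open>d x < 0\<close> f(2) g(2)
    by (intro eps_optimal_shifted_value_fn_bound[where P=P and x=x, OF J prob sets start filtration
          f_borel _ g_borel _ \<sigma> opt]) auto
  then obtain r where r: "\<gamma> = ereal r"
    using \<open>\<gamma> < \<infinity>\<close> by (cases \<gamma>) (auto dest: spec[of _ 0])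
  interpret prob_space "P x" by (rule prob)
  have "enn2real (\<integral>\<^sup>+ \<omega>. \<sigma> \<omega> \<partial>P x) \<le> (r + (2 * sup_norm g + \<epsilon>)) / - d x"
  proof (rule enn2real_nn_integral_le_if_stop_min_le)
    show "\<sigma> \<in> borel_measurable (P x)"
      using stopping_times_borel_measurable[OF \<sigma> filtration(2)] measurable_cong_sets[OF sets refl]
      by blast
    fix n
    have "(\<integral>\<omega>. stop_min \<sigma> (real n) \<omega> \<partial>P x) * - d x \<le> r + (2 * sup_norm g + \<epsilon>)"
      using \<gamma>_bound[of n] by (simp add: r algebra_simps)
    then show "(\<integral>\<omega>. stop_min \<sigma> (real n) \<omega> \<partial>P x) \<le> (r + (2 * sup_norm g + \<epsilon>)) / - d x"
      using \<open>d x < 0\<close> by (subst pos_le_divide_eq) auto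
  qed
  then show ?thesis
    using \<open>d x < 0\<close> by (simp add: \<gamma>_def[symmetric] r)
qed

end
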